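(* Let $m \ge 1$ be an integer. Let $(h(n))_{n\ge 1}$ be the non-decreasing sequence of non-negative integers with $h(1)=0$ in which, for each integer $k\ge 0$, the value $k$ appears exactly $mk+1$ times. Let $(a(n))_{n\ge1}$ be the sequence of positive integers defined by $a(1)=1$ and the nested recurrence $$a(n+1) = n - a^{(m)}(n) + a^{(m+1)}(n) \qquad (n\ge 1).$$ Then $a(n) = n - h(n)$ for all $n \ge 1$, and this is the unique sequence satisfying the recurrence with $a(1)=1$.
   Context: For a function $f$ on the positive integers, the iterates are defined by $f^{(0)}(n)=n$ and $f^{(j+1)}(n)=f(f^{(j)}(n))$; thus $a^{(m)}(n)$ denotes $a$ applied $m$ times to $n$. Equivalently, $h(n)=k$ if and only if $T^{\star}_k \le n < T^{\star}_{k+1}$, where $T^{\star}_k = 1 + m\binom{k}{2} + k$ for $k\ge 0$. *)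

theory Defs
  imports Main
begin

text \<open>T m k = 1 + m * binom(k,2) + k: first index at which h takes value k.\<close>
definition Tstar :: "nat \<Rightarrow> nat \<Rightarrow> nat" where
  "Tstar m k = 1 + m * (k choose 2) + k"

definition hseq :: "nat \<Rightarrow> nat \<Rightarrow> nat" where
  "hseq m n = (THE k. Tstar m k \<le> n \<and> n < Tstar m (Suc k))"

definition satisfies_rec :: "nat \<Rightarrow> (nat \<Rightarrow> nat) \<Rightarrow> bool" where
  "satisfies_rec m a \<longleftrightarrow> a 1 = 1 \<and> (\<forall>n\<ge>1. a n \<ge> 1) \<and>
     (\<forall>n\<ge>1. int (a (n + 1)) = int n - int ((a ^^ m) n) + int ((a ^^ (m + 1)) n))"

end

theory Submission
  imports Defs
begin

text \<open>
  Write \<open>T k\<close> for \<open>Tstar m k\<close>. On the block \<open>[T k, T (k+1))\<close>, of length \<open>m k + 1\<close>,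
  the solution is \<open>a n = n - k\<close>. Suppose \<open>n + 1\<close> lies in block \<open>k + 1\<close>. Every step of
  iterating \<open>a\<close> from \<open>n\<close> subtracts \<open>k\<close> or \<open>k + 1\<close>, so the \<open>j\<close>-th iterate stays in the
  window \<open>[T k + (m - j) k, T (k+1) + (m - j) (k + 1))\<close>; for \<open>j = m\<close> this is block \<open>k\<close>.
  Hence the \<open>(m+1)\<close>-st iterate is the \<open>m\<close>-th one minus \<open>k\<close>, and the right-hand side of
  the recurrence equals \<open>n - k = a (n + 1)\<close>. Uniqueness holds because \<open>a\<close> maps
  \<open>{1..n}\<close> into itself, so the recurrence computes \<open>a (n + 1)\<close> from \<open>a\<close> on \<open>{1..n}\<close>.
\<close>

lemma Tstar_Suc: "Tstar m (Suc k) = Tstar m k + m * k + 1"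
  by (simp add: Tstar_def numeral_2_eq_2 algebra_simps)

lemma strict_mono_Tstar: "strict_mono (Tstar m)"
  by (simp add: strict_mono_Suc_iff Tstar_Suc)

lemma Tstar_ge: "k + 1 \<le> Tstar m k"
  by (simp add: Tstar_def)

lemma hseq_eqI:
  assumes "Tstar m k \<le> n" "n < Tstar m (Suc k)"
  shows "hseq m n = k"
  unfolding hseq_def
proof (rule the_equality)
  fix l assume l: "Tstar m l \<le> n \<and> n < Tstar m (Suc l)"
  have "\<not> Suc l \<le> k" and "\<not> Suc k \<le> l"
    using l assms strict_mono_less_eq[OF strict_mono_Tstar] by (metis leD le_less_trans)+
  then show "l = k" by linarith
qed (use assms in simp)

lemma ex_Tstar_block: "n \<ge> 1 \<Longrightarrow> \<exists>k. Tstar m k \<le> n \<and> n < Tstar m (Suc k)"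
proof (induction n rule: dec_induct)
  case base
  show ?case by (rule exI[of _ 0]) (simp add: Tstar_def)
next
  case (step n)
  then obtain k where k: "Tstar m k \<le> n" "n < Tstar m (Suc k)" by blast
  show ?case
  proof (cases "Suc n = Tstar m (Suc k)")
    case True
    then show ?thesis using strict_mono_Tstar by (metis le_refl lessI strict_monoD)
  next
    case False
    then show ?thesis using k by (metis le_SucI Suc_lessI)
  qed
qed

definition aseq :: "nat \<Rightarrow> nat \<Rightarrow> nat" where
  "aseq m n = n - hseq m n"

lemma aseq_eq: "Tstar m k \<le> n \<Longrightarrow> n < Tstar m (Suc k) \<Longrightarrow> aseq m n = n - k"
  by (simp add: aseq_def hseq_eqI)

lemma aseq_bounds:
  assumes "n \<ge> 1"
  shows "1 \<le> aseq m n \<and> aseq m n \<le> n"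
proof -
  obtain k where "Tstar m k \<le> n" "n < Tstar m (Suc k)"
    using ex_Tstar_block[OF assms] by blast
  then show ?thesis
    using Tstar_ge[of k m] by (simp_all add: aseq_eq)
qed

lemma aseq_step_window:
  assumes "i < m"
    and lower: "Tstar m k + Suc i * k \<le> x"
    and upper: "x < Tstar m (Suc k) + Suc i * Suc k"
  shows "Tstar m k + i * k \<le> aseq m x \<and> aseq m x < Tstar m (Suc k) + i * Suc k"
proof (cases "Tstar m (Suc k) \<le> x")
  case True
  have "Suc i * Suc k \<le> m * Suc k" using \<open>i < m\<close> by (intro mult_le_mono1) simp
  then have "x < Tstar m (Suc (Suc k))" using upper Tstar_Suc[of m "Suc k"] by linarith
  then have "aseq m x = x - Suc k" using True by (rule aseq_eq[rotated])
  moreover have "Suc i * k \<le> m * k" using \<open>i < m\<close> by (intro mult_le_mono1) simp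
  ultimately show ?thesis using True upper Tstar_Suc[of m k] by simp arith
next
  case False
  then have "aseq m x = x - k" using lower by (simp add: aseq_eq)
  then show ?thesis using False lower by simp arith
qed

lemma aseq_funpow_window:
  assumes block: "Tstar m (Suc k) \<le> Suc n" "Suc n < Tstar m (Suc (Suc k))"
    and "j \<le> m"
  shows "Tstar m k + (m - j) * k \<le> (aseq m ^^ j) n \<and>
         (aseq m ^^ j) n < Tstar m (Suc k) + (m - j) * Suc k"
  using \<open>j \<le> m\<close>
proof (induction j)
  case 0
  then show ?case using block Tstar_Suc[of m k] Tstar_Suc[of m "Suc k"] by simp
next
  case (Suc j)
  then have "m - j = Suc (m - Suc j)" by simp
  then show ?case using Suc aseq_step_window[of "m - Suc j" m k "(aseq m ^^ j) n"] by simp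
qed

lemma aseq_rec:
  assumes "n \<ge> 1"
  shows "int (aseq m (n + 1)) = int n - int ((aseq m ^^ m) n) + int ((aseq m ^^ (m + 1)) n)"
proof -
  obtain K where K: "Tstar m K \<le> Suc n" "Suc n < Tstar m (Suc K)"
    using ex_Tstar_block[of "Suc n" m] by auto
  have "Tstar m (Suc 0) = 2" by (simp add: Tstar_def)
  then have "K \<noteq> 0" using K(2) assms by (cases K) auto
  then obtain k where k: "K = Suc k" using not0_implies_Suc by blast
  define y where "y = (aseq m ^^ m) n"
  have y: "Tstar m k \<le> y" "y < Tstar m (Suc k)"
    using aseq_funpow_window[of m k n m] K k by (simp_all add: y_def)
  have "(aseq m ^^ (m + 1)) n = y - k" using y by (simp add: y_def aseq_eq)
  moreover have "aseq m (n + 1) = n - k" using K k by (simp add: aseq_eq)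
  moreover have "k + 1 \<le> y" using y(1) Tstar_ge[of k m] by linarith
  moreover have "k \<le> n" using K(1) k Tstar_ge[of "Suc k" m] by simp
  ultimately show ?thesis by (simp add: y_def)
qed

lemma satisfies_rec_aseq: "satisfies_rec m (aseq m)"
proof -
  have "hseq m 1 = 0" by (rule hseq_eqI) (simp_all add: Tstar_def)
  then show ?thesis
    unfolding satisfies_rec_def using aseq_rec aseq_bounds by (simp add: aseq_def)
qed

lemma funpow_eq_on_invariant:
  assumes "\<forall>x\<in>A. f x = g x" "g ` A \<subseteq> A" "x \<in> A"
  shows "(f ^^ i) x = (g ^^ i) x \<and> (g ^^ i) x \<in> A"
  by (induction i) (use assms in auto)

lemma satisfies_rec_unique:
  assumes a: "satisfies_rec m a" and b: "satisfies_rec m b"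
    and b_bounds: "\<And>n. n \<ge> 1 \<Longrightarrow> 1 \<le> b n \<and> b n \<le> n"
  shows "\<forall>j\<in>{1..n}. a j = b j"
proof (induction n)
  case (Suc n)
  have "a (Suc n) = b (Suc n)"
  proof (cases "n = 0")
    case True
    then show ?thesis using a b by (simp add: satisfies_rec_def)
  next
    case False
    have "b ` {1..n} \<subseteq> {1..n}" using b_bounds by fastforce
    then have iter: "(a ^^ i) n = (b ^^ i) n" for i
      using funpow_eq_on_invariant[OF Suc.IH] False by simp
    have "int (a (n + 1)) = int n - int ((a ^^ m) n) + int ((a ^^ (m + 1)) n)"
      using a False by (simp add: satisfies_rec_def)
    also have "\<dots> = int (b (n + 1))"
      using b False by (simp only: iter) (simp add: satisfies_rec_def)
    finally show ?thesis by simp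
  qed
  then show ?case using Suc.IH by (auto simp: le_Suc_eq)
qed simp

theorem mainTheorem1:
  fixes m :: nat
  assumes "m \<ge> 1"
  shows "satisfies_rec m (\<lambda>n. n - hseq m n)
     \<and> (\<forall>a. satisfies_rec m a \<longrightarrow> (\<forall>n\<ge>1. a n = n - hseq m n))"
proof -
  have "a n = aseq m n" if "satisfies_rec m a" "n \<ge> 1" for a n
    using satisfies_rec_unique[OF that(1) satisfies_rec_aseq aseq_bounds, of n] that(2) by simp
  then show ?thesis using satisfies_rec_aseq by (simp flip: aseq_def)
qed

end
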